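(* Let $k\ge 1$, $0\le r<k$ and $n\ge 1$ be integers, and let $$A_n(k,r,x)=\left(\binom{i-k+1+r}{j}x^k+\binom{i+1+r}{j+1}\right)_{i,j=0}^{n-1}.$$ Then $x^r\det A_n(k,r,x)=F^{(k)}_{kn+r}(x)$.
   Context: Binomial coefficients are the generalized ones: for an integer $m$ (possibly negative) and an integer $j$, $\binom{m}{j}=\frac{m(m-1)\cdots(m-j+1)}{j!}$ if $j\ge 0$ and $\binom{m}{j}=0$ if $j<0$. For an integer $k\ge1$, the generalized Fibonacci polynomials $F^{(k)}_n(x)\in\mathbb{Z}[x]$ ($n\ge0$) are defined by $F^{(k)}_n(x)=x^n$ for $0\le n<k$ and $F^{(k)}_n(x)=xF^{(k)}_{n-1}(x)+F^{(k)}_{n-k}(x)$ for $n\ge k$; equivalently $F^{(k)}_n(x)=\sum_{j=0}^{\lfloor n/k\rfloor}\binom{n-(k-1)j}{j}x^{n-kj}$. *)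

theory Defs
  imports "HOL-Computational_Algebra.Polynomial" "Jordan_Normal_Form.Determinant"
begin

text \<open>Generalized binomial coefficient binom(m,j) for an integer m and a natural j
  (j >= 0): m(m-1)...(m-j+1)/j!.  (The case j < 0 never arises in the statement,
  since all lower indices are j or j+1 with j a natural number.)\<close>
definition ibinom :: "int \<Rightarrow> nat \<Rightarrow> int" where
  "ibinom m j = (\<Prod>i<j. m - int i) div int (fact j)"

fun genfib :: "nat \<Rightarrow> nat \<Rightarrow> int poly" where
  "genfib k n = (if k = 0 then 0 else if n < k then monom 1 n
                 else [:0, 1:] * genfib k (n - 1) + genfib k (n - k))"

definition Amat :: "nat \<Rightarrow> nat \<Rightarrow> nat \<Rightarrow> int poly mat" where
  "Amat k r n = mat n n (\<lambda>(i, j).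
      [:ibinom (int i - int k + 1 + int r) j:] * monom 1 k
      + [:ibinom (int i + 1 + int r) (j + 1):])"

end

theory Submission
  imports Defs "HOL-Computational_Algebra.Formal_Power_Series"
begin

(*
  Multiplying A_n on the right by the unitriangular Toeplitz matrix T = (binom(k-r-1, j-l)) and
  using Vandermonde's convolution gives A_n T = P H, with P = (binom(i, l)) the Pascal matrix and H
  a Hessenberg matrix whose rows below the first are shifts of a_d = binom(k, d) + [d = 1] x^k;
  hence det A_n = det H.  Expanding det H along its first column expresses it as an alternating
  convolution of its first row with the Toeplitz-Hessenberg minors D_p, which satisfy
  D_(p+1) = sum_m (-1)^m a_(m+1) D_(p-m).

  On the Fibonacci side, applying the difference operator f(m) - f(m - k) s times to the
  recurrence F_m = x F_(m-1) + F_(m-k) gives sum_i (-1)^i binom(s, i) F_(m-ki) = x^s F_(m-s), as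
  long as the index 0 where the recurrence fails is avoided.  With s = k this shows that
  x^(k-1) D_p and F_(kp+k-1) satisfy the same recurrence, so they agree; with s = k - r - 1 it then
  turns x^(k-1) det H into x^(k-r-1) F_(kn+r).
*)

section \<open>Generalized binomial coefficients\<close>

lemma of_int_ibinom: "of_int (ibinom m j) = (of_int m :: 'a::field_char_0) gchoose j"
  unfolding ibinom_def lessThan_atLeast0 gbinomial_int_mult_fact[symmetric]
  by (simp add: of_int_gbinomial)

lemma ibinom_of_nat: "ibinom (int p) j = int (p choose j)"
  using of_int_ibinom[of "int p" j, where 'a = real] by (simp add: binomial_gbinomial[symmetric])

lemma ibinom_0 [simp]: "ibinom m 0 = 1"
  by (simp add: ibinom_def)

lemma ibinom_Vandermonde:
  "(\<Sum>l = 0..j. ibinom a l * ibinom b (j - l)) = ibinom (a + b) j"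
proof -
  have "real_of_int (\<Sum>l = 0..j. ibinom a l * ibinom b (j - l)) = real_of_int (ibinom (a + b) j)"
    by (simp add: of_int_ibinom gbinomial_Vandermonde)
  then show ?thesis by (simp only: of_int_eq_iff)
qed

section \<open>Hessenberg determinants\<close>

definition hessenberg_mat :: "(nat \<Rightarrow> 'a::comm_ring_1) \<Rightarrow> (nat \<Rightarrow> 'a) \<Rightarrow> nat \<Rightarrow> 'a mat" where
  "hessenberg_mat v a n = mat n n (\<lambda>(l, j).
     if l = 0 then v j else if l \<le> j + 1 then a (j + 1 - l) else 0)"

definition toeplitz_hessenberg_det :: "(nat \<Rightarrow> 'a::comm_ring_1) \<Rightarrow> nat \<Rightarrow> 'a" where
  "toeplitz_hessenberg_det a p = det (hessenberg_mat (\<lambda>j. a (Suc j)) a p)"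

lemma dim_hessenberg_mat [simp]:
  "dim_row (hessenberg_mat v a n) = n" "dim_col (hessenberg_mat v a n) = n"
  unfolding hessenberg_mat_def by simp_all

lemma toeplitz_hessenberg_det_0 [simp]: "toeplitz_hessenberg_det a 0 = 1"
  by (simp add: toeplitz_hessenberg_det_def hessenberg_mat_def)

lemma det_hessenberg_mat_Suc_Suc:
  assumes "a 0 = 1"
  shows "det (hessenberg_mat v a (Suc (Suc n))) =
    v 0 * toeplitz_hessenberg_det a (Suc n) - det (hessenberg_mat (\<lambda>j. v (Suc j)) a (Suc n))"
proof -
  let ?H = "hessenberg_mat v a (Suc (Suc n))"
  have "det ?H = (\<Sum>i<Suc (Suc n). ?H $$ (i, 0) * cofactor ?H i 0)"
    by (rule laplace_expansion_column) auto
  also have "\<dots> = ?H $$ (0, 0) * cofactor ?H 0 0 + ?H $$ (1, 0) * cofactor ?H 1 0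
      + (\<Sum>i<n. ?H $$ (Suc (Suc i), 0) * cofactor ?H (Suc (Suc i)) 0)"
    by (simp only: sum.lessThan_Suc_shift) (simp add: add.assoc)
  also have "(\<Sum>i<n. ?H $$ (Suc (Suc i), 0) * cofactor ?H (Suc (Suc i)) 0) = 0"
    by (rule sum.neutral) (auto simp: hessenberg_mat_def)
  finally have expansion: "det ?H = ?H $$ (0, 0) * cofactor ?H 0 0 + ?H $$ (1, 0) * cofactor ?H 1 0"
    by simp
  have minor_0: "mat_delete ?H 0 0 = hessenberg_mat (\<lambda>j. a (Suc j)) a (Suc n)"
    by (rule eq_matI) (auto simp: hessenberg_mat_def mat_delete_def Suc_diff_le)
  have minor_1: "mat_delete ?H 1 0 = hessenberg_mat (\<lambda>j. v (Suc j)) a (Suc n)"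
    by (rule eq_matI) (auto simp: hessenberg_mat_def mat_delete_def Suc_diff_le)
  show ?thesis
    using assms unfolding expansion cofactor_def minor_0 minor_1
    by (simp add: toeplitz_hessenberg_det_def hessenberg_mat_def)
qed

lemma det_hessenberg_mat:
  assumes "a 0 = 1"
  shows "det (hessenberg_mat v a (Suc n)) =
    (\<Sum>m\<le>n. (-1) ^ m * v m * toeplitz_hessenberg_det a (n - m))"
proof (induction n arbitrary: v)
  case 0
  show ?case by (subst det_single) (auto simp: hessenberg_mat_def)
next
  case (Suc n)
  show ?case
    unfolding det_hessenberg_mat_Suc_Suc[of a, OF assms] Suc.IH
    by (simp only: sum.atMost_Suc_shift) (simp add: sum_negf[symmetric])
qed

lemma toeplitz_hessenberg_det_Suc:
  assumes "a 0 = 1"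
  shows "toeplitz_hessenberg_det a (Suc n) =
    (\<Sum>m\<le>n. (-1) ^ m * a (Suc m) * toeplitz_hessenberg_det a (n - m))"
  unfolding toeplitz_hessenberg_det_def[of a "Suc n"] by (rule det_hessenberg_mat[of a, OF assms])

section \<open>Unitriangular binomial matrices\<close>

definition pascal_mat :: "nat \<Rightarrow> 'a::comm_ring_1 mat" where
  "pascal_mat n = mat n n (\<lambda>(i, l). of_nat (i choose l))"

definition binomial_toeplitz_mat :: "nat \<Rightarrow> nat \<Rightarrow> 'a::comm_ring_1 mat" where
  "binomial_toeplitz_mat b n = mat n n (\<lambda>(l, j). if l \<le> j then of_nat (b choose (j - l)) else 0)"

lemma det_pascal_mat: "det (pascal_mat n) = 1"
proof -
  have "det (pascal_mat n) = prod_list (diag_mat (pascal_mat n))"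
    by (rule det_lower_triangular[of n]) (auto simp: pascal_mat_def binomial_eq_0)
  also have "\<dots> = 1"
    by (simp add: prod_list_diag_prod pascal_mat_def)
  finally show ?thesis .
qed

lemma det_binomial_toeplitz_mat: "det (binomial_toeplitz_mat b n) = 1"
proof -
  have "det (binomial_toeplitz_mat b n) = prod_list (diag_mat (binomial_toeplitz_mat b n))"
    by (rule det_upper_triangular) (auto simp: binomial_toeplitz_mat_def upper_triangular_def)
  also have "\<dots> = 1"
    by (simp add: prod_list_diag_prod binomial_toeplitz_mat_def)
  finally show ?thesis .
qed

lemma index_mult_mat_sum:
  assumes "i < dim_row A" "j < dim_col B" "dim_col A = dim_row B"
  shows "(A * B) $$ (i, j) = (\<Sum>l<dim_row B. A $$ (i, l) * B $$ (l, j))"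
  using assms by (simp add: scalar_prod_def lessThan_atLeast0)

lemma sum_lessThan_if_le:
  fixes f :: "nat \<Rightarrow> 'a::comm_monoid_add"
  assumes "\<And>l. n \<le> l \<Longrightarrow> l \<le> m \<Longrightarrow> f l = 0"
  shows "(\<Sum>l<n. if l \<le> m then f l else 0) = (\<Sum>l = 0..m. f l)"
proof -
  have "(\<Sum>l<n. if l \<le> m then f l else 0) = (\<Sum>l \<in> {..<n} \<inter> {0..m}. f l)"
    by (simp add: sum.inter_restrict)
  also have "\<dots> = (\<Sum>l = 0..m. f l)"
    by (rule sum.mono_neutral_left) (auto, metis assms not_less)
  finally show ?thesis .
qed

lemma sum_binomial_Vandermonde_lessThan:
  assumes "i < n"
  shows "(\<Sum>l<n. of_nat (i choose l) * (if l \<le> m then of_nat (c choose (m - l)) else 0)) =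
    (of_nat ((i + c) choose m) :: 'a::comm_semiring_1)"
proof -
  have "(\<Sum>l<n. of_nat (i choose l) * (if l \<le> m then of_nat (c choose (m - l)) else 0)) =
      (\<Sum>l<n. if l \<le> m then of_nat (i choose l) * of_nat (c choose (m - l)) else (0 :: 'a))"
    by (rule sum.cong) auto
  also have "\<dots> = (\<Sum>l = 0..m. of_nat (i choose l) * of_nat (c choose (m - l)))"
    by (rule sum_lessThan_if_le) (use assms in \<open>simp add: binomial_eq_0\<close>)
  also have "\<dots> = of_nat ((i + c) choose m)"
    by (simp only: of_nat_mult[symmetric] of_nat_sum[symmetric] binomial_Vandermonde)
  finally show ?thesis .
qed

section \<open>Iterated differences of the Fibonacci recurrence\<close>

lemma alternating_binomial_sum_Suc:
  fixes g :: "nat \<Rightarrow> 'a::comm_ring_1"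
  shows "(\<Sum>i\<le>Suc s. (-1) ^ i * of_nat (Suc s choose i) * g i) =
    (\<Sum>i\<le>s. (-1) ^ i * of_nat (s choose i) * (g i - g (Suc i)))"
proof -
  have "(\<Sum>i\<le>Suc s. (-1) ^ i * of_nat (Suc s choose i) * g i) =
      (g 0 + (\<Sum>i\<le>s. (-1) ^ Suc i * of_nat (s choose Suc i) * g (Suc i)))
      + (\<Sum>i\<le>s. (-1) ^ Suc i * of_nat (s choose i) * g (Suc i))"
    by (simp add: sum.atMost_Suc_shift sum.distrib[symmetric] algebra_simps del: sum.atMost_Suc)
  also have "g 0 + (\<Sum>i\<le>s. (-1) ^ Suc i * of_nat (s choose Suc i) * g (Suc i)) =
      (\<Sum>i\<le>Suc s. (-1) ^ i * of_nat (s choose i) * g i)"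
    by (simp only: sum.atMost_Suc_shift) simp
  also have "\<dots> = (\<Sum>i\<le>s. (-1) ^ i * of_nat (s choose i) * g i)"
    by (simp add: binomial_eq_0)
  also have "\<dots> + (\<Sum>i\<le>s. (-1) ^ Suc i * of_nat (s choose i) * g (Suc i)) =
      (\<Sum>i\<le>s. (-1) ^ i * of_nat (s choose i) * (g i - g (Suc i)))"
    by (simp add: right_diff_distrib sum_subtractf sum_negf)
  finally show ?thesis .
qed

lemma alternating_binomial_difference:
  fixes f :: "int \<Rightarrow> 'a::comm_ring_1"
  assumes "\<And>i j. i + j < s \<Longrightarrow>
    f (m - int (k * i + j)) = x * f (m - int (k * i + j) - 1) + f (m - int (k * i + j) - int k)"
  shows "(\<Sum>i\<le>s. (-1) ^ i * of_nat (s choose i) * f (m - int (k * i))) = x ^ s * f (m - int s)"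
  using assms
proof (induction s arbitrary: m)
  case 0
  show ?case by simp
next
  case (Suc s)
  have shifted: "(\<Sum>i\<le>s. (-1) ^ i * of_nat (s choose i) * f (m - int k - int (k * i))) =
      x ^ s * f (m - int k - int s)"
  proof (rule Suc.IH)
    fix i j
    assume "i + j < s"
    then show "f (m - int k - int (k * i + j)) =
        x * f (m - int k - int (k * i + j) - 1) + f (m - int k - int (k * i + j) - int k)"
      using Suc.prems[of "Suc i" j] by (simp add: algebra_simps)
  qed
  have "(\<Sum>i\<le>Suc s. (-1) ^ i * of_nat (Suc s choose i) * f (m - int (k * i))) =
      (\<Sum>i\<le>s. (-1) ^ i * of_nat (s choose i) * f (m - int (k * i)))
      - (\<Sum>i\<le>s. (-1) ^ i * of_nat (s choose i) * f (m - int k - int (k * i)))"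
    unfolding alternating_binomial_sum_Suc by (simp add: sum_subtractf algebra_simps)
  also have "\<dots> = x ^ s * (f (m - int s) - f (m - int s - int k))"
    using Suc.IH[of m] Suc.prems shifted by (simp add: algebra_simps)
  also have "f (m - int s) - f (m - int s - int k) = x * f (m - int s - 1)"
    using Suc.prems[of 0 s] by simp
  finally show ?case
    by (simp add: algebra_simps)
qed

declare genfib.simps [simp del]

lemma genfib_less: "1 \<le> k \<Longrightarrow> m < k \<Longrightarrow> genfib k m = monom 1 m"
  by (subst genfib.simps) simp

lemma genfib_ge: "1 \<le> k \<Longrightarrow> k \<le> m \<Longrightarrow> genfib k m = [:0, 1:] * genfib k (m - 1) + genfib k (m - k)"
  by (subst genfib.simps) simp

text \<open>Extension by zero to negative indices; the recurrence then holds at every index except 0.\<close>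
definition genfib_int :: "nat \<Rightarrow> int \<Rightarrow> int poly" where
  "genfib_int k m = (if m < 0 then 0 else genfib k (nat m))"

lemma genfib_int_of_nat [simp]: "genfib_int k (int m) = genfib k m"
  by (simp add: genfib_int_def)

lemma genfib_int_rec:
  assumes "1 \<le> k" "m \<noteq> 0"
  shows "genfib_int k m = [:0, 1:] * genfib_int k (m - 1) + genfib_int k (m - int k)"
proof (cases "m < 0")
  case True
  then show ?thesis by (simp add: genfib_int_def)
next
  case False
  define p where "p = nat (m - 1)"
  have p: "m = int (Suc p)"
    using False assms(2) by (simp add: p_def)
  have "genfib_int k m = genfib k (Suc p)"
    unfolding p by (rule genfib_int_of_nat)
  also have "\<dots> = [:0, 1:] * genfib k p + genfib_int k (m - int k)"
  proof (cases "Suc p < k")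
    case True
    then show ?thesis
      using assms(1) by (simp add: p genfib_int_def genfib_less monom_Suc)
  next
    case False
    have "m - int k = int (Suc p - k)"
      using p False by simp
    then show ?thesis
      using assms(1) False by (simp only: genfib_int_of_nat) (simp add: genfib_ge[of k "Suc p"])
  qed
  also have "genfib k p = genfib_int k (m - 1)"
    using p by simp
  finally show ?thesis .
qed

lemma genfib_int_alternating_sum_eq:
  assumes "c < k"
  shows "(\<Sum>i\<le>s. (-1) ^ i * of_nat (s choose i) * genfib_int k (int (k * p + c) - int (k * i))) =
    (\<Sum>i\<le>p. (-1) ^ i * of_nat (s choose i) * genfib k (k * (p - i) + c))"
proof (rule sum.mono_neutral_cong)
  fix i
  assume "i \<in> {..s} - {..p}"
  then have "k * Suc p \<le> k * i"
    by (intro mult_le_mono2) simp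
  then have "k * p + c < k * i"
    using assms by simp
  then have "int (k * p + c) - int (k * i) < 0"
    by linarith
  then show "(-1) ^ i * of_nat (s choose i) * genfib_int k (int (k * p + c) - int (k * i)) = 0"
    by (simp add: genfib_int_def)
next
  fix i
  assume "i \<in> {..s} \<inter> {..p}"
  then have "k * i \<le> k * p"
    by simp
  then have "k * p + c - k * i = k * (p - i) + c"
    by (simp add: diff_mult_distrib2)
  moreover have "int (k * p + c) - int (k * i) = int (k * p + c - k * i)"
    using \<open>k * i \<le> k * p\<close> by (intro of_nat_diff[symmetric]) linarith
  ultimately have "int (k * p + c) - int (k * i) = int (k * (p - i) + c)"
    by simp
  then show "(-1) ^ i * of_nat (s choose i) * genfib_int k (int (k * p + c) - int (k * i)) =
      (-1) ^ i * of_nat (s choose i) * genfib k (k * (p - i) + c)"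
    by (simp only: genfib_int_of_nat)
qed (auto simp: binomial_eq_0)

lemma genfib_alternating_binomial_sum:
  assumes "1 \<le> k" "s \<le> k" "1 \<le> p"
  shows "(\<Sum>i\<le>p. (-1) ^ i * of_nat (s choose i) * genfib k (k * (p - i) + (k - 1))) =
    monom 1 s * genfib k (k * p + (k - 1) - s)"
proof -
  have "k \<le> k * p"
    using assms(3) by simp
  have off_initial: "int (k * p + (k - 1)) - int (k * i + j) \<noteq> 0" if "i + j < s" for i j
  proof
    assume "int (k * p + (k - 1)) - int (k * i + j) = 0"
    then have eq: "k * i + j = k * p + (k - 1)"
      by (metis right_minus_eq of_nat_eq_iff)
    have "j mod k = (k - 1) mod k"
      using arg_cong[OF eq, of "\<lambda>x. x mod k"] by (simp only: mod_mult_self4)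
    then have "j = k - 1"
      using that assms(1,2) by simp
    moreover from this have "i = 0"
      using that assms(2) by simp
    ultimately have "k * p = 0"
      using eq by simp
    then show False
      using \<open>k \<le> k * p\<close> assms(1) by linarith
  qed
  have "(\<Sum>i\<le>p. (-1) ^ i * of_nat (s choose i) * genfib k (k * (p - i) + (k - 1))) =
      (\<Sum>i\<le>s. (-1) ^ i * of_nat (s choose i) * genfib_int k (int (k * p + (k - 1)) - int (k * i)))"
    using assms(1) by (intro genfib_int_alternating_sum_eq[symmetric]) simp
  also have "\<dots> = [:0, 1:] ^ s * genfib_int k (int (k * p + (k - 1)) - int s)"
    by (intro alternating_binomial_difference genfib_int_rec assms(1) off_initial)
  also have "int (k * p + (k - 1)) - int s = int (k * p + (k - 1) - s)"
    using assms(2) \<open>k \<le> k * p\<close> by (intro of_nat_diff[symmetric]) linarith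
  finally show ?thesis
    by (simp only: genfib_int_of_nat monom_altdef smult_1_left)
qed

section \<open>The Hessenberg determinant of the generalized Fibonacci polynomials\<close>

text \<open>The sequence \<open>a\<^sub>d\<close> and the first row of the Hessenberg matrix \<open>H\<close> with \<open>A\<^sub>n T = P H\<close>.\<close>
definition genfib_hess_coeff :: "nat \<Rightarrow> nat \<Rightarrow> int poly" where
  "genfib_hess_coeff k d = of_nat (k choose d) + (if d = 1 then monom 1 k else 0)"

definition genfib_hess_row :: "nat \<Rightarrow> nat \<Rightarrow> nat \<Rightarrow> int poly" where
  "genfib_hess_row k r j = genfib_hess_coeff k (Suc j) - of_nat ((k - Suc r) choose Suc j)"

lemma genfib_hess_coeff_0 [simp]: "genfib_hess_coeff k 0 = 1"
  by (simp add: genfib_hess_coeff_def)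

lemma genfib_hess_recurrence:
  assumes "1 \<le> k"
  shows "genfib k (k * Suc n + (k - 1)) =
    (\<Sum>m\<le>n. (-1) ^ m * genfib_hess_coeff k (Suc m) * genfib k (k * (n - m) + (k - 1)))"
proof -
  let ?g = "\<lambda>p. genfib k (k * p + (k - 1))"
  have "?g (Suc n) - (\<Sum>m\<le>n. (-1) ^ m * of_nat (k choose Suc m) * ?g (n - m)) =
      (\<Sum>i\<le>Suc n. (-1) ^ i * of_nat (k choose i) * ?g (Suc n - i))"
    by (simp only: sum.atMost_Suc_shift) (simp add: sum_negf[symmetric])
  also have "\<dots> = monom 1 k * ?g n"
    using genfib_alternating_binomial_sum[of k k "Suc n"] assms by simp
  also have "\<dots> = (\<Sum>m\<le>n. if m = 0 then monom 1 k * ?g (n - m) else 0)"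
    by simp
  also have "\<dots> = (\<Sum>m\<le>n. (-1) ^ m * (if m = 0 then monom 1 k else 0) * ?g (n - m))"
    by (rule sum.cong) auto
  finally show ?thesis
    by (simp add: genfib_hess_coeff_def sum.distrib ring_distribs eq_diff_eq)
qed

lemma monom_mult_toeplitz_hessenberg_det_genfib:
  assumes "1 \<le> k"
  shows "monom 1 (k - 1) * toeplitz_hessenberg_det (genfib_hess_coeff k) p = genfib k (k * p + (k - 1))"
proof (induction p rule: less_induct)
  case (less p)
  show ?case
  proof (cases p)
    case 0
    then show ?thesis
      using assms by (simp add: genfib_less)
  next
    case (Suc n)
    have "monom 1 (k - 1) * toeplitz_hessenberg_det (genfib_hess_coeff k) (Suc n) =
        (\<Sum>m\<le>n. (-1) ^ m * genfib_hess_coeff k (Suc m) *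
          (monom 1 (k - 1) * toeplitz_hessenberg_det (genfib_hess_coeff k) (n - m)))"
      by (simp add: toeplitz_hessenberg_det_Suc sum_distrib_left algebra_simps)
    also have "\<dots> = (\<Sum>m\<le>n. (-1) ^ m * genfib_hess_coeff k (Suc m) * genfib k (k * (n - m) + (k - 1)))"
      using Suc by (intro sum.cong refl) (simp only: atMost_iff less.IH less_Suc_eq_le diff_le_self)
    also have "\<dots> = genfib k (k * p + (k - 1))"
      using Suc genfib_hess_recurrence[OF assms] by simp
    finally show ?thesis
      using Suc by simp
  qed
qed

lemma monom_mult_det_genfib_hessenberg:
  assumes "1 \<le> k" "r < k"
  shows "monom 1 (k - 1) * det (hessenberg_mat (genfib_hess_row k r) (genfib_hess_coeff k) (Suc n)) =
    monom 1 (k - Suc r) * genfib k (k * Suc n + r)"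
proof -
  let ?g = "\<lambda>p. genfib k (k * p + (k - 1))"
  have "monom 1 (k - 1) * det (hessenberg_mat (genfib_hess_row k r) (genfib_hess_coeff k) (Suc n)) =
      (\<Sum>m\<le>n. (-1) ^ m * genfib_hess_row k r m *
        (monom 1 (k - 1) * toeplitz_hessenberg_det (genfib_hess_coeff k) (n - m)))"
    by (simp add: det_hessenberg_mat sum_distrib_left algebra_simps)
  also have "\<dots> = (\<Sum>m\<le>n. (-1) ^ m * genfib_hess_row k r m * ?g (n - m))"
    by (simp only: monom_mult_toeplitz_hessenberg_det_genfib[OF assms(1)])
  also have "\<dots> = (\<Sum>m\<le>n. (-1) ^ m * genfib_hess_coeff k (Suc m) * ?g (n - m))
      - (\<Sum>m\<le>n. (-1) ^ m * of_nat ((k - Suc r) choose Suc m) * ?g (n - m))"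
    by (simp add: genfib_hess_row_def sum_subtractf[symmetric] algebra_simps)
  also have "\<dots> = ?g (Suc n) - (\<Sum>m\<le>n. (-1) ^ m * of_nat ((k - Suc r) choose Suc m) * ?g (n - m))"
    by (simp only: genfib_hess_recurrence[OF assms(1)])
  also have "\<dots> = (\<Sum>i\<le>Suc n. (-1) ^ i * of_nat ((k - Suc r) choose i) * ?g (Suc n - i))"
    by (simp only: sum.atMost_Suc_shift) (simp add: sum_negf[symmetric])
  also have "\<dots> = monom 1 (k - Suc r) * genfib k (k * Suc n + (k - 1) - (k - Suc r))"
    using assms(1) by (intro genfib_alternating_binomial_sum) simp_all
  also have "k * Suc n + (k - 1) - (k - Suc r) = k * Suc n + r"
    using assms(2) by simp
  finally show ?thesis .
qed

section \<open>Reduction of the matrix to Hessenberg form\<close>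

lemma genfib_hessenberg_entry:
  assumes "l < n" "j < n"
  shows "hessenberg_mat (genfib_hess_row k r) (genfib_hess_coeff k) n $$ (l, j) =
    (if l \<le> Suc j then of_nat (k choose (Suc j - l)) else 0) + (if l = j then monom 1 k else 0)
    - (if l = 0 then of_nat ((k - Suc r) choose Suc j) else 0)"
  using assms
  by (auto simp: hessenberg_mat_def genfib_hess_row_def genfib_hess_coeff_def Suc_diff_le)

lemma pascal_mult_genfib_hessenberg_entry:
  assumes "i < n" "j < n"
  shows "(pascal_mat n * hessenberg_mat (genfib_hess_row k r) (genfib_hess_coeff k) n) $$ (i, j) =
    of_nat (i choose j) * monom 1 k + of_nat ((i + k) choose Suc j) - of_nat ((k - Suc r) choose Suc j)"
proof -
  let ?c = "\<lambda>l. of_nat (i choose l) :: int poly"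
  have "(pascal_mat n * hessenberg_mat (genfib_hess_row k r) (genfib_hess_coeff k) n) $$ (i, j) =
      (\<Sum>l<n. ?c l * hessenberg_mat (genfib_hess_row k r) (genfib_hess_coeff k) n $$ (l, j))"
    using assms by (subst index_mult_mat_sum) (simp_all add: pascal_mat_def)
  also have "\<dots> =
      (\<Sum>l<n. ?c l * (if l \<le> Suc j then of_nat (k choose (Suc j - l)) else 0))
      + (\<Sum>l<n. ?c l * (if l = j then monom 1 k else 0))
      - (\<Sum>l<n. ?c l * (if l = 0 then of_nat ((k - Suc r) choose Suc j) else 0))"
    using assms(2) by (simp add: genfib_hessenberg_entry sum.distrib sum_subtractf algebra_simps)
  also have "(\<Sum>l<n. ?c l * (if l \<le> Suc j then of_nat (k choose (Suc j - l)) else 0)) =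
      of_nat ((i + k) choose Suc j)"
    by (rule sum_binomial_Vandermonde_lessThan[OF assms(1)])
  also have "(\<Sum>l<n. ?c l * (if l = j then monom 1 k else 0)) = ?c j * monom 1 k"
    using assms(2) by (simp add: if_distrib cong: if_cong)
  also have "(\<Sum>l<n. ?c l * (if l = 0 then of_nat ((k - Suc r) choose Suc j) else 0)) =
      of_nat ((k - Suc r) choose Suc j)"
    using assms(1) by (simp add: if_distrib cong: if_cong)
  finally show ?thesis by simp
qed

lemma ibinom_binomial_convolution_shift:
  assumes "r < k"
  shows "(\<Sum>l = 0..j. ibinom (int i - int k + 1 + int r) l * int ((k - Suc r) choose (j - l))) =
    int (i choose j)"
proof -
  have "(\<Sum>l = 0..j. ibinom (int i - int k + 1 + int r) l * int ((k - Suc r) choose (j - l))) =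
      ibinom (int i - int k + 1 + int r + int (k - Suc r)) j"
    by (simp add: ibinom_Vandermonde flip: ibinom_of_nat)
  also have "int i - int k + 1 + int r + int (k - Suc r) = int i"
    using assms by simp
  finally show ?thesis by (simp add: ibinom_of_nat)
qed

lemma ibinom_binomial_convolution_Suc:
  assumes "r < k"
  shows "(\<Sum>l = 0..j. ibinom (int i + 1 + int r) (Suc l) * int ((k - Suc r) choose (j - l))) =
    int ((i + k) choose Suc j) - int ((k - Suc r) choose Suc j)"
proof -
  have "int i + 1 + int r + int (k - Suc r) = int (i + k)"
    using assms by simp
  then have "int ((i + k) choose Suc j) = ibinom (int i + 1 + int r + int (k - Suc r)) (Suc j)"
    by (simp only: ibinom_of_nat)
  also have "\<dots> = (\<Sum>l = 0..Suc j. ibinom (int i + 1 + int r) l * ibinom (int (k - Suc r)) (Suc j - l))"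
    by (rule ibinom_Vandermonde[symmetric])
  also have "\<dots> = int ((k - Suc r) choose Suc j) +
      (\<Sum>l = 0..j. ibinom (int i + 1 + int r) (Suc l) * int ((k - Suc r) choose (j - l)))"
    by (simp only: sum.atLeast0_atMost_Suc_shift) (simp add: ibinom_of_nat)
  finally show ?thesis by simp
qed

lemma index_Amat:
  assumes "i < n" "l < n"
  shows "Amat k r n $$ (i, l) =
    of_int (ibinom (int i - int k + 1 + int r) l) * monom 1 k + of_int (ibinom (int i + 1 + int r) (Suc l))"
  using assms by (simp add: Amat_def of_int_poly)

lemma Amat_mult_binomial_toeplitz_entry:
  assumes "r < k" "i < n" "j < n"
  shows "(Amat k r n * binomial_toeplitz_mat (k - Suc r) n) $$ (i, j) =
    of_nat (i choose j) * monom 1 k + of_nat ((i + k) choose Suc j) - of_nat ((k - Suc r) choose Suc j)"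
proof -
  let ?t = "\<lambda>l. int ((k - Suc r) choose (j - l))"
  let ?\<alpha> = "\<lambda>l. ibinom (int i - int k + 1 + int r) l" and ?\<beta> = "\<lambda>l. ibinom (int i + 1 + int r) (Suc l)"
  have "(Amat k r n * binomial_toeplitz_mat (k - Suc r) n) $$ (i, j) =
      (\<Sum>l<n. Amat k r n $$ (i, l) * binomial_toeplitz_mat (k - Suc r) n $$ (l, j))"
    using assms(2,3)
    by (subst index_mult_mat_sum) (simp_all add: Amat_def binomial_toeplitz_mat_def)
  also have "\<dots> =
      (\<Sum>l<n. if l \<le> j then (of_int (?\<alpha> l) * monom 1 k + of_int (?\<beta> l)) * of_int (?t l) else 0)"
    using assms(2,3) by (intro sum.cong) (simp_all add: index_Amat binomial_toeplitz_mat_def)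
  also have "\<dots> = (\<Sum>l = 0..j. (of_int (?\<alpha> l) * monom 1 k + of_int (?\<beta> l)) * of_int (?t l))"
    by (rule sum_lessThan_if_le) (use assms(3) in simp)
  also have "\<dots> = of_int (\<Sum>l = 0..j. ?\<alpha> l * ?t l) * monom 1 k + of_int (\<Sum>l = 0..j. ?\<beta> l * ?t l)"
    by (simp add: sum.distrib sum_distrib_left sum_distrib_right algebra_simps)
  finally show ?thesis
    unfolding ibinom_binomial_convolution_shift[OF assms(1)] ibinom_binomial_convolution_Suc[OF assms(1)]
    by simp
qed

lemma Amat_mult_binomial_toeplitz:
  assumes "r < k"
  shows "Amat k r n * binomial_toeplitz_mat (k - Suc r) n =
    pascal_mat n * hessenberg_mat (genfib_hess_row k r) (genfib_hess_coeff k) n"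
proof (rule eq_matI)
  fix i j
  assume "i < dim_row (pascal_mat n * hessenberg_mat (genfib_hess_row k r) (genfib_hess_coeff k) n)"
    and "j < dim_col (pascal_mat n * hessenberg_mat (genfib_hess_row k r) (genfib_hess_coeff k) n)"
  then have "i < n" "j < n"
    by (simp_all add: pascal_mat_def)
  then show "(Amat k r n * binomial_toeplitz_mat (k - Suc r) n) $$ (i, j) =
      (pascal_mat n * hessenberg_mat (genfib_hess_row k r) (genfib_hess_coeff k) n) $$ (i, j)"
    by (simp add: Amat_mult_binomial_toeplitz_entry pascal_mult_genfib_hessenberg_entry assms)
qed (simp_all add: Amat_def binomial_toeplitz_mat_def pascal_mat_def)

lemma det_Amat:
  assumes "r < k"
  shows "det (Amat k r n) = det (hessenberg_mat (genfib_hess_row k r) (genfib_hess_coeff k) n)"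
proof -
  have carriers: "Amat k r n \<in> carrier_mat n n" "binomial_toeplitz_mat (k - Suc r) n \<in> carrier_mat n n"
    "pascal_mat n \<in> carrier_mat n n"
    "hessenberg_mat (genfib_hess_row k r) (genfib_hess_coeff k) n \<in> carrier_mat n n"
    by (simp_all add: Amat_def binomial_toeplitz_mat_def pascal_mat_def carrier_matI)
  have "det (Amat k r n) = det (Amat k r n * binomial_toeplitz_mat (k - Suc r) n)"
    by (simp add: det_mult[OF carriers(1,2)] det_binomial_toeplitz_mat)
  also have "\<dots> = det (hessenberg_mat (genfib_hess_row k r) (genfib_hess_coeff k) n)"
    by (simp add: Amat_mult_binomial_toeplitz[OF assms] det_mult[OF carriers(3,4)] det_pascal_mat)
  finally show ?thesis .
qed

theorem theorem1:
  fixes k r n :: nat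
  assumes "k \<ge> 1" and "r < k" and "n \<ge> 1"
  shows "monom 1 r * det (Amat k r n) = genfib k (k * n + r)"
proof -
  obtain n' where n: "n = Suc n'"
    using assms(3) by (cases n) auto
  have "monom 1 (k - Suc r) * (monom 1 r * det (Amat k r n)) = monom 1 (k - 1) * det (Amat k r n)"
    using assms(2) by (simp add: mult.assoc[symmetric] mult_monom)
  also have "\<dots> = monom 1 (k - Suc r) * genfib k (k * n + r)"
    unfolding det_Amat[OF assms(2)] n by (rule monom_mult_det_genfib_hessenberg[OF assms(1,2)])
  finally show ?thesis
    by simp
qed

end
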